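(* If $g:\{0,1\}^n\to\{0,1\}^{m(n)}$ is super-bits (in the polynomial-security sense below), then the ensemble $(g(U_n))_{n\in\mathbb{N}}$ is $\cap$-unpredictable.
   Context: $U_n$ is the uniform distribution on $\{0,1\}^n$. A generator is a family $g:\{0,1\}^n\to\{0,1\}^{m(n)}$ computable by polynomial-size circuits with $m(n)>n$. A nondeterministic circuit $D$ accepts $x$ iff some assignment to its nondeterministic inputs makes it output 1. Here $g$ is called super-bits if for every nondeterministic polynomial-size circuit family $D$, every polynomial $p$ and all sufficiently large $n$, $\Pr[D(U_{m(n)})=1]-\Pr[D(g(U_n))=1]<1/p(n)$. A nondeterministic algorithm $\mathcal{A}$ is function-computing if on every input each computation branch yields one of $0,1,\bot$ and some branch yields $0$ or $1$; $\mathcal{A}(x)=c\in\{0,1\}$ if every branch yields $c$ or $\bot$, and otherwise $\mathcal{A}(x)=\bot$. An ensemble $(Z_n)$ (with $Z_n$ over $\{0,1\}^{l(n)}$) is $\cap$-predictable if there exist a polynomial-size nondeterministic function-computing algorithm $\mathcal{A}$, a polynomial $p$, and infinitely many $n$ each with some $i=i(n)<|Z_n|$ such that $\Pr[\mathcal{A}(Z_n[1\ldots i])=Z_n[i+1]]\ge 1/2+1/p(n)$; it is $\cap$-unpredictable otherwise. *)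

theory Defs
  imports "HOL-Probability.Probability" "HOL-Computational_Algebra.Polynomial"
begin

definition bitstrings :: "nat \<Rightarrow> bool list set" where
  "bitstrings n = {xs. length xs = n}"

definition U :: "nat \<Rightarrow> bool list pmf" where
  "U n = pmf_of_set (bitstrings n)"

text \<open>Gate k may only refer to wires (earlier gates) j < k.
  GIn i reads the i-th ordinary input, GNd i the i-th nondeterministic input.\<close>
datatype gate = GIn nat | GNd nat | GConst bool | GNot nat | GAnd nat nat | GOr nat nat

record circuit =
  n_in  :: nat
  n_nd  :: nat
  gates :: "gate list"
  outs  :: "nat list"

fun gate_ok :: "nat \<Rightarrow> nat \<Rightarrow> nat \<Rightarrow> gate \<Rightarrow> bool" where
  "gate_ok ni nd k (GIn i) = (i < ni)"
| "gate_ok ni nd k (GNd i) = (i < nd)"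
| "gate_ok ni nd k (GConst b) = True"
| "gate_ok ni nd k (GNot j) = (j < k)"
| "gate_ok ni nd k (GAnd j j') = (j < k \<and> j' < k)"
| "gate_ok ni nd k (GOr j j') = (j < k \<and> j' < k)"

definition wf_circuit :: "circuit \<Rightarrow> bool" where
  "wf_circuit C \<longleftrightarrow>
     (\<forall>k < length (gates C). gate_ok (n_in C) (n_nd C) k (gates C ! k)) \<and>
     (\<forall>w \<in> set (outs C). w < length (gates C))"

definition csize :: "circuit \<Rightarrow> nat" where
  "csize C = length (gates C)"

fun eval_gate :: "bool list \<Rightarrow> bool list \<Rightarrow> bool list \<Rightarrow> gate \<Rightarrow> bool" where
  "eval_gate x y vs (GIn i) = x ! i"
| "eval_gate x y vs (GNd i) = y ! i"
| "eval_gate x y vs (GConst b) = b"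
| "eval_gate x y vs (GNot j) = (\<not> vs ! j)"
| "eval_gate x y vs (GAnd j j') = (vs ! j \<and> vs ! j')"
| "eval_gate x y vs (GOr j j') = (vs ! j \<or> vs ! j')"

definition wire_vals :: "bool list \<Rightarrow> bool list \<Rightarrow> gate list \<Rightarrow> bool list" where
  "wire_vals x y gs = foldl (\<lambda>vs g. vs @ [eval_gate x y vs g]) [] gs"

definition run :: "circuit \<Rightarrow> bool list \<Rightarrow> bool list \<Rightarrow> bool list" where
  "run C x y = map (\<lambda>w. wire_vals x y (gates C) ! w) (outs C)"

definition computes :: "circuit \<Rightarrow> (bool list \<Rightarrow> bool list) \<Rightarrow> nat \<Rightarrow> nat \<Rightarrow> bool" where
  "computes C f n k \<longleftrightarrow> wf_circuit C \<and> n_in C = n \<and> n_nd C = 0 \<and> length (outs C) = k \<and>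
     (\<forall>x \<in> bitstrings n. run C x [] = f x)"

definition nd_circuit :: "circuit \<Rightarrow> nat \<Rightarrow> bool" where
  "nd_circuit D k \<longleftrightarrow> wf_circuit D \<and> n_in D = k \<and> length (outs D) = 1"

definition accepts :: "circuit \<Rightarrow> bool list \<Rightarrow> bool" where
  "accepts D x \<longleftrightarrow> (\<exists>y \<in> bitstrings (n_nd D). run D x y = [True])"

text \<open>A nondeterministic circuit with two output bits [v, b]; a branch (assignment y)
  yields b \<in> {0,1} if v = 1 and \<bottom> if v = 0. Results are encoded as bool option
  (None = \<bottom>).\<close>
definition branch_out :: "circuit \<Rightarrow> bool list \<Rightarrow> bool list \<Rightarrow> bool option" where
  "branch_out A x y = (case run A x y of [v, b] \<Rightarrow> (if v then Some b else None) | _ \<Rightarrow> None)"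

definition function_computing :: "circuit \<Rightarrow> bool" where
  "function_computing A \<longleftrightarrow> wf_circuit A \<and> length (outs A) = 2 \<and>
     (\<forall>x \<in> bitstrings (n_in A). \<exists>y \<in> bitstrings (n_nd A). branch_out A x y \<noteq> None)"

definition nd_value :: "circuit \<Rightarrow> bool list \<Rightarrow> bool option" where
  "nd_value A x =
     (if \<exists>c. (\<exists>y \<in> bitstrings (n_nd A). branch_out A x y = Some c) \<and>
              (\<forall>y \<in> bitstrings (n_nd A). branch_out A x y \<in> {None, Some c})
      then Some (THE c. (\<exists>y \<in> bitstrings (n_nd A). branch_out A x y = Some c) \<and>
              (\<forall>y \<in> bitstrings (n_nd A). branch_out A x y \<in> {None, Some c}))
      else None)"

text \<open>Polynomials are nonzero polynomials with natural-number coefficients.\<close>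

definition generator :: "(nat \<Rightarrow> nat) \<Rightarrow> (nat \<Rightarrow> bool list \<Rightarrow> bool list) \<Rightarrow> bool" where
  "generator m g \<longleftrightarrow> (\<forall>n. m n > n) \<and>
     (\<exists>q :: nat poly. \<forall>n. \<exists>C. computes C (g n) n (m n) \<and> csize C \<le> poly q n)"

definition super_bits :: "(nat \<Rightarrow> nat) \<Rightarrow> (nat \<Rightarrow> bool list \<Rightarrow> bool list) \<Rightarrow> bool" where
  "super_bits m g \<longleftrightarrow>
     (\<forall>(D :: nat \<Rightarrow> circuit) (q :: nat poly).
        (\<forall>n. nd_circuit (D n) (m n) \<and> csize (D n) \<le> poly q n) \<longrightarrow>
        (\<forall>p :: nat poly. p \<noteq> 0 \<longrightarrow>
          (\<forall>\<^sub>F n in sequentially.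
             measure_pmf.prob (U (m n)) {z. accepts (D n) z}
             - measure_pmf.prob (map_pmf (g n) (U n)) {z. accepts (D n) z}
             < 1 / real (poly p n))))"

text \<open>Ensemble Z with Z n a distribution on {0,1}^(l n). The predictor is a
  (non-uniform) family of nondeterministic function-computing circuits A n of size
  polynomial in n, applied to the i-bit prefix.\<close>
definition cap_predictable :: "(nat \<Rightarrow> nat) \<Rightarrow> (nat \<Rightarrow> bool list pmf) \<Rightarrow> bool" where
  "cap_predictable l Z \<longleftrightarrow>
     (\<exists>(A :: nat \<Rightarrow> circuit) (q :: nat poly) (p :: nat poly).
        p \<noteq> 0 \<and>
        (\<forall>n. function_computing (A n) \<and> csize (A n) \<le> poly q n) \<and>
        infinite {n. \<exists>i < l n. n_in (A n) = i \<and>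
           measure_pmf.prob (Z n) {z. nd_value (A n) (take i z) = Some (z ! i)}
             \<ge> 1/2 + 1 / real (poly p n)})"

definition cap_unpredictable :: "(nat \<Rightarrow> nat) \<Rightarrow> (nat \<Rightarrow> bool list pmf) \<Rightarrow> bool" where
  "cap_unpredictable l Z \<longleftrightarrow> \<not> cap_predictable l Z"

end

theory Submission
  imports Defs
begin

text \<open>A \<inter>-predictor A for bit i of g(U_n) yields a nondeterministic distinguisher D that,
  on input z, guesses a branch of A on the prefix z[1..i] whose value is the complement of z[i+1].
  Since A is function-computing, for every prefix some branch has a value, so for each prefix at
  least one of the two extensions is accepted: D accepts at least half of the uniform distribution.
  On the other hand D rejects every z on which A predicts z[i+1] correctly, so its acceptance
  probability on g(U_n) is at most 1/2 - 1/p(n). The advantage 1/p(n) contradicts super-bits.\<close>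

lemma wire_vals_snoc:
  "wire_vals x y (gs @ [g]) = wire_vals x y gs @ [eval_gate x y (wire_vals x y gs) g]"
  by (simp add: wire_vals_def)

lemma length_wire_vals: "length (wire_vals x y gs) = length gs"
  by (induction gs rule: rev_induct) (simp_all add: wire_vals_snoc, simp add: wire_vals_def)

lemma wire_vals_append:
  "wire_vals x y (gs @ hs) = foldl (\<lambda>vs g. vs @ [eval_gate x y vs g]) (wire_vals x y gs) hs"
  by (simp add: wire_vals_def)

lemma wire_vals_take_inputs:
  assumes "\<forall>k<length gs. gate_ok i nd k (gs ! k)"
  shows "wire_vals z y gs = wire_vals (take i z) y gs"
  using assms
proof (induction gs rule: rev_induct)
  case Nil
  then show ?case by (simp add: wire_vals_def)
next
  case (snoc g gs)
  have prefix_ok: "\<forall>k<length gs. gate_ok i nd k (gs ! k)"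
    using snoc.prems by (metis butlast_snoc length_append_singleton less_SucI nth_butlast)
  have "gate_ok i nd (length gs) g"
    using snoc.prems by (metis length_append_singleton lessI nth_append_length)
  then have "eval_gate z y vs g = eval_gate (take i z) y vs g" for vs
    by (cases g) auto
  then show ?case using snoc.IH[OF prefix_ok] by (simp add: wire_vals_snoc)
qed

lemma finite_bitstrings: "finite (bitstrings n)"
proof -
  have "bitstrings n = {xs. set xs \<subseteq> (UNIV :: bool set) \<and> length xs = n}"
    by (auto simp: bitstrings_def)
  then show ?thesis using finite_lists_length_eq[of "UNIV :: bool set" n] by simp
qed

lemma bitstrings_nonempty: "bitstrings n \<noteq> {}"
  by (auto simp: bitstrings_def intro!: exI[of _ "replicate n False"])

lemma nd_value_SomeD:
  assumes "nd_value A x = Some c" and "y \<in> bitstrings (n_nd A)"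
  shows "branch_out A x y \<in> {None, Some c}"
proof -
  let ?P = "\<lambda>c. (\<exists>y \<in> bitstrings (n_nd A). branch_out A x y = Some c) \<and>
              (\<forall>y \<in> bitstrings (n_nd A). branch_out A x y \<in> {None, Some c})"
  have ex: "\<exists>c. ?P c" and c: "c = (THE c. ?P c)"
    using assms(1) unfolding nd_value_def by (auto split: if_splits)
  have unique: "a = b" if "?P a" and "?P b" for a b
    using that by fastforce
  from ex obtain c0 where c0: "?P c0" by blast
  have "(THE c. ?P c) = c0" using c0 unique by (intro the_equality) blast+
  with c c0 have "?P c" by simp
  then show ?thesis using assms(2) by blast
qed

lemma generator_output_length:
  assumes "generator m g" and "z \<in> set_pmf (map_pmf (g n) (U n))"
  shows "length z = m n"
proof -
  obtain x where x: "x \<in> bitstrings n" "z = g n x"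
    using assms(2) by (auto simp: U_def set_pmf_of_set[OF bitstrings_nonempty finite_bitstrings])
  obtain C where "computes C (g n) n (m n)" using assms(1) unfolding generator_def by blast
  then have "run C x [] = g n x" "length (outs C) = m n" using x by (auto simp: computes_def)
  then show ?thesis using x by (metis length_map run_def)
qed

text \<open>The seven extra gates compute v \<and> (b \<noteq> z!i) from the outputs v, b of A,
  wire L being the first new gate.\<close>
definition disagreement_gates :: "nat \<Rightarrow> nat \<Rightarrow> nat \<Rightarrow> nat \<Rightarrow> gate list" where
  "disagreement_gates L i v b = [GIn i, GNot L, GNot b, GAnd b (L+1), GAnd (L+2) L,
                                 GOr (L+3) (L+4), GAnd v (L+5)]"

definition disagreement_circuit :: "circuit \<Rightarrow> nat \<Rightarrow> circuit" where
  "disagreement_circuit A M = \<lparr>n_in = M, n_nd = n_nd A,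
     gates = gates A @ disagreement_gates (length (gates A)) (n_in A) (outs A ! 0) (outs A ! 1),
     outs = [length (gates A) + 6]\<rparr>"

definition const_false_circuit :: "nat \<Rightarrow> circuit" where
  "const_false_circuit M = \<lparr>n_in = M, n_nd = 0, gates = [GConst False], outs = [0]\<rparr>"

text \<open>The fallback for a predictor reading at least M bits only keeps the family well typed;
  it is never used at the lengths where prediction succeeds.\<close>
definition distinguisher :: "circuit \<Rightarrow> nat \<Rightarrow> circuit" where
  "distinguisher A M =
     (if n_in A < M then disagreement_circuit A M else const_false_circuit M)"

lemma nd_circuit_disagreement_circuit:
  assumes "function_computing A" and "n_in A < M"
  shows "nd_circuit (disagreement_circuit A M) M"
    and "csize (disagreement_circuit A M) = csize A + 7"
proof -
  have wf: "wf_circuit A" "length (outs A) = 2"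
    using assms(1) by (auto simp: function_computing_def)
  then have outs_ok: "outs A ! 0 < length (gates A)" "outs A ! 1 < length (gates A)"
    by (auto simp: wf_circuit_def)
  have "gate_ok M (n_nd A) k (gates A ! k)" if "k < length (gates A)" for k
  proof -
    have "gate_ok (n_in A) (n_nd A) k (gates A ! k)" using wf that by (auto simp: wf_circuit_def)
    then show ?thesis using assms(2) by (cases "gates A ! k") auto
  qed
  then show "nd_circuit (disagreement_circuit A M) M"
    using outs_ok assms(2)
    by (auto simp: nd_circuit_def wf_circuit_def disagreement_circuit_def disagreement_gates_def
        nth_append less_Suc_eq)
  show "csize (disagreement_circuit A M) = csize A + 7"
    by (simp add: csize_def disagreement_circuit_def disagreement_gates_def)
qed

lemma nd_circuit_distinguisher:
  assumes "function_computing A"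
  shows "nd_circuit (distinguisher A M) M \<and> csize (distinguisher A M) \<le> csize A + 7"
proof (cases "n_in A < M")
  case True
  then show ?thesis using nd_circuit_disagreement_circuit[OF assms] by (simp add: distinguisher_def)
next
  case False
  then show ?thesis
    by (simp add: distinguisher_def const_false_circuit_def nd_circuit_def wf_circuit_def csize_def)
qed

lemma run_disagreement_circuit:
  assumes "function_computing A" and "n_in A < M" and "length z = M"
  shows "run (disagreement_circuit A M) z y =
           [branch_out A (take (n_in A) z) y = Some (\<not> z ! n_in A)]"
proof -
  let ?i = "n_in A"
  have wf: "wf_circuit A" "length (outs A) = 2"
    using assms(1) by (auto simp: function_computing_def)
  then obtain v b where outs: "outs A = [v, b]"
    by (metis (no_types, opaque_lifting) Suc_length_conv length_0_conv numeral_2_eq_2)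
  have outs_ok: "v < length (gates A)" "b < length (gates A)"
    using wf outs by (auto simp: wf_circuit_def)
  have gates_ok: "\<forall>k<length (gates A). gate_ok ?i (n_nd A) k (gates A ! k)"
    using wf by (auto simp: wf_circuit_def)
  define vs where "vs = wire_vals (take ?i z) y (gates A)"
  have vs_z: "wire_vals z y (gates A) = vs"
    unfolding vs_def by (rule wire_vals_take_inputs[OF gates_ok])
  have "length vs = length (gates A)" unfolding vs_def by (simp add: length_wire_vals)
  then have "run (disagreement_circuit A M) z y =
               [vs ! v \<and> ((vs ! b \<and> \<not> z ! ?i) \<or> (\<not> vs ! b \<and> z ! ?i))]"
    using outs_ok
    by (simp add: run_def disagreement_circuit_def wire_vals_append vs_z disagreement_gates_def
        outs nth_append)
  moreover have "branch_out A (take ?i z) y = (if vs ! v then Some (vs ! b) else None)"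
    by (simp add: branch_out_def run_def outs vs_def)
  ultimately show ?thesis by (cases "vs ! v"; cases "vs ! b"; cases "z ! ?i") simp_all
qed

lemma accepts_disagreement_circuit:
  assumes "function_computing A" and "n_in A < M" and "length z = M"
  shows "accepts (disagreement_circuit A M) z \<longleftrightarrow>
           (\<exists>y\<in>bitstrings (n_nd A). branch_out A (take (n_in A) z) y = Some (\<not> z ! n_in A))"
  using run_disagreement_circuit[OF assms]
  by (simp add: accepts_def disagreement_circuit_def)

lemma prob_U_accepts_disagreement_circuit:
  assumes fc: "function_computing A" and iM: "n_in A < M"
  shows "measure_pmf.prob (U M) {z. accepts (disagreement_circuit A M) z} \<ge> 1/2"
proof -
  let ?i = "n_in A"
  let ?B = "bitstrings M"
  let ?T = "?B \<inter> {z. accepts (disagreement_circuit A M) z}"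
  define flip where "flip = (\<lambda>z :: bool list. z[?i := \<not> z ! ?i])"
  have cover: "?B \<subseteq> ?T \<union> flip ` ?T"
  proof
    fix z assume z: "z \<in> ?B"
    then have lz: "length z = M" by (simp add: bitstrings_def)
    then have "take ?i z \<in> bitstrings ?i" using iM by (simp add: bitstrings_def)
    then obtain y c where y: "y \<in> bitstrings (n_nd A)" "branch_out A (take ?i z) y = Some c"
      using fc unfolding function_computing_def by blast
    show "z \<in> ?T \<union> flip ` ?T"
    proof (cases "c = (\<not> z ! ?i)")
      case True
      then show ?thesis using z y accepts_disagreement_circuit[OF fc iM lz] by auto
    next
      case False
      have lf: "length (flip z) = M" using lz by (simp add: flip_def)
      have "flip z \<in> ?T"
        using lf lz iM y False accepts_disagreement_circuit[OF fc iM lf]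
        by (auto simp: bitstrings_def flip_def)
      moreover have "flip (flip z) = z" using lz iM by (simp add: flip_def)
      ultimately show ?thesis by (metis UnI2 image_eqI)
    qed
  qed
  have fin: "finite ?T" using finite_bitstrings by blast
  have "card ?B \<le> card (?T \<union> flip ` ?T)" using cover fin by (intro card_mono) auto
  also have "\<dots> \<le> card ?T + card (flip ` ?T)" by (rule card_Un_le)
  also have "\<dots> \<le> 2 * card ?T" using card_image_le[OF fin, of flip] by simp
  finally have "real (card ?B) \<le> 2 * real (card ?T)" by linarith
  moreover have "real (card ?B) > 0"
    using finite_bitstrings bitstrings_nonempty by (simp add: card_gt_0_iff)
  moreover have "measure_pmf.prob (U M) {z. accepts (disagreement_circuit A M) z} = card ?T / card ?B"
    unfolding U_def by (subst measure_pmf_of_set[OF bitstrings_nonempty finite_bitstrings]) simp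
  ultimately have "real (card ?T) / real (card ?B) \<ge> 1/2 \<and>
      measure_pmf.prob (U M) {z. accepts (disagreement_circuit A M) z} = card ?T / card ?B"
    by (simp add: field_simps)
  then show ?thesis by linarith
qed

lemma prob_accepts_disagreement_circuit:
  assumes fc: "function_computing A" and iM: "n_in A < M"
    and len: "\<forall>z\<in>set_pmf Q. length z = M"
  shows "measure_pmf.prob Q {z. accepts (disagreement_circuit A M) z}
         \<le> 1 - measure_pmf.prob Q {z. nd_value A (take (n_in A) z) = Some (z ! n_in A)}"
proof -
  let ?C = "{z. nd_value A (take (n_in A) z) = Some (z ! n_in A)}"
  have "measure_pmf.prob Q {z. accepts (disagreement_circuit A M) z} \<le> measure_pmf.prob Q (- ?C)"
  proof (rule measure_pmf.finite_measure_mono_AE)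
    show "AE z in measure_pmf Q. z \<in> {z. accepts (disagreement_circuit A M) z} \<longrightarrow> z \<in> - ?C"
    proof (rule AE_pmfI, intro impI)
      fix z assume "z \<in> set_pmf Q" and "z \<in> {z. accepts (disagreement_circuit A M) z}"
      then obtain y where y: "y \<in> bitstrings (n_nd A)"
        "branch_out A (take (n_in A) z) y = Some (\<not> z ! n_in A)"
        using len accepts_disagreement_circuit[OF fc iM] by blast
      then show "z \<in> - ?C" using nd_value_SomeD[of A "take (n_in A) z" "z ! n_in A" y] by auto
    qed
  qed simp
  also have "\<dots> = 1 - measure_pmf.prob Q ?C"
    using measure_pmf.prob_compl[of ?C Q] by (simp add: Compl_eq_Diff_UNIV)
  finally show ?thesis .
qed

lemma distinguisher_advantage:
  assumes "function_computing A" and "n_in A < M"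
    and "\<forall>z\<in>set_pmf Q. length z = M"
    and "measure_pmf.prob Q {z. nd_value A (take (n_in A) z) = Some (z ! n_in A)} \<ge> 1/2 + e"
  shows "measure_pmf.prob (U M) {z. accepts (distinguisher A M) z}
         - measure_pmf.prob Q {z. accepts (distinguisher A M) z} \<ge> e"
  using prob_U_accepts_disagreement_circuit[OF assms(1,2)]
    prob_accepts_disagreement_circuit[OF assms(1-3)] assms(2,4)
  by (simp add: distinguisher_def)

theorem proposition5p2:
  fixes m :: "nat \<Rightarrow> nat" and g :: "nat \<Rightarrow> bool list \<Rightarrow> bool list"
  assumes "generator m g"
    and "super_bits m g"
  shows "cap_unpredictable m (\<lambda>n. map_pmf (g n) (U n))"
  unfolding cap_unpredictable_def cap_predictable_def
proof (intro notI, elim exE conjE)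
  fix A :: "nat \<Rightarrow> circuit" and q p :: "nat poly"
  assume "p \<noteq> 0" and A: "\<forall>n. function_computing (A n) \<and> csize (A n) \<le> poly q n"
    and "infinite {n. \<exists>i < m n. n_in (A n) = i \<and>
           measure_pmf.prob (map_pmf (g n) (U n)) {z. nd_value (A n) (take i z) = Some (z ! i)}
             \<ge> 1/2 + 1 / real (poly p n)}" (is "infinite ?S")
  define D where "D n = distinguisher (A n) (m n)" for n
  have "\<forall>n. nd_circuit (D n) (m n) \<and> csize (D n) \<le> poly (q + [:7:]) n"
    using A nd_circuit_distinguisher unfolding D_def by (simp add: poly_add) (meson add_right_mono order_trans)
  then have "\<forall>\<^sub>F n in sequentially.
      measure_pmf.prob (U (m n)) {z. accepts (D n) z}
      - measure_pmf.prob (map_pmf (g n) (U n)) {z. accepts (D n) z} < 1 / real (poly p n)"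
    using assms(2) \<open>p \<noteq> 0\<close> unfolding super_bits_def by blast
  then obtain N where small_advantage: "\<And>n. n \<ge> N \<Longrightarrow>
      measure_pmf.prob (U (m n)) {z. accepts (D n) z}
      - measure_pmf.prob (map_pmf (g n) (U n)) {z. accepts (D n) z} < 1 / real (poly p n)"
    unfolding eventually_sequentially by blast
  obtain n where "n \<in> ?S" and "n \<ge> N"
    using \<open>infinite ?S\<close> by (meson infinite_nat_iff_unbounded_le)
  then show False
    using distinguisher_advantage[of "A n" "m n" "map_pmf (g n) (U n)" "1 / real (poly p n)"]
      small_advantage[of n] A generator_output_length[OF assms(1)]
    by (auto simp: D_def)
qed

end
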